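(* Let $r\ge1$, $\mathbf{m}\in\mathbb{N}^r$, $m=m_1+\cdots+m_r$, $\mathbf{f}\in\mathbb{C}^r$, $b,c\in\mathbb{C}$ with $(c-b-m)_m\ne0$. Define $$ P_m(x)=\frac{1}{(c-b-m)_m}\sum_{k=0}^m(b)_{k}(1-c+b)_{k}D_{k}(c-b-m-x)_{m-k},\qquad D_k=\frac{(-1)^k(\mathbf{f}-b)_{\mathbf{m}}}{k!}{}_{r+1}F_{r}\!\left(\begin{matrix}-k,1-\mathbf{f}+b\\1-\mathbf{f}+b-\mathbf{m}\end{matrix}\right), $$ and $$ Q(b,c,\mathbf{f},\mathbf{m};t)=\frac{1}{(c-b-m)_{m}}\sum_{k=0}^{m}(b)_k\,C_{k,r}\,(t)_{k}\,(c-b-m-t)_{m-k},\qquad C_{k,r}=\frac{(-1)^k}{k!}{}_{r+1}F_{r}\!\left(\begin{matrix}-k,\mathbf{f}+\mathbf{m}\\\mathbf{f}\end{matrix}\right). $$ Then $P_m(x)=(\mathbf{f})_{\mathbf{m}}\,Q(b,c,\mathbf{f},\mathbf{m};x)$ identically in $x$.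
   Context: $(a)_k=\Gamma(a+k)/\Gamma(a)$. For vectors: $(\mathbf{f})_{\mathbf{m}}=\prod_i(f_i)_{m_i}$, $\mathbf{f}+\alpha$, $\mathbf{f}+\mathbf{m}$ componentwise; a vector among hypergeometric parameters means its components are listed. ${}_pF_q(\mathbf{a};\mathbf{b})$ denotes the (terminating) generalized hypergeometric series evaluated at $1$. Parameters are assumed such that all expressions are defined. *)

theory Defs
  imports "HOL-Analysis.Analysis"
begin

definition poch_vec :: "complex list \<Rightarrow> nat list \<Rightarrow> complex" where
  "poch_vec fs ms = prod_list (map2 (\<lambda>a n. pochhammer a n) fs ms)"

text \<open>Terminating hypergeometric series at 1 with first numerator parameter -k:
  F(-k, as; bs) = sum_{n=0}^k (-k)_n prod (a)_n / (prod (b)_n n!).  Since (-k)_n = 0 for n > k,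
  this is the full series.\<close>
definition hypF_term :: "nat \<Rightarrow> complex list \<Rightarrow> complex list \<Rightarrow> complex" where
  "hypF_term k as bs = (\<Sum>n\<le>k. pochhammer (- of_nat k) n * prod_list (map (\<lambda>a. pochhammer a n) as)
      / (prod_list (map (\<lambda>a. pochhammer a n) bs) * fact n))"

definition D_coef :: "complex \<Rightarrow> complex list \<Rightarrow> nat list \<Rightarrow> nat \<Rightarrow> complex" where
  "D_coef b fs ms k = (-1)^k * poch_vec (map (\<lambda>fi. fi - b) fs) ms / fact k
     * hypF_term k (map (\<lambda>fi. 1 - fi + b) fs) (map2 (\<lambda>fi mi. 1 - fi + b - of_nat mi) fs ms)"

definition P_poly :: "complex \<Rightarrow> complex \<Rightarrow> complex list \<Rightarrow> nat list \<Rightarrow> complex \<Rightarrow> complex" where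
  "P_poly b c fs ms x = (let m = sum_list ms in
     1 / pochhammer (c - b - of_nat m) m *
     (\<Sum>k\<le>m. pochhammer b k * pochhammer (1 - c + b) k * D_coef b fs ms k
               * pochhammer (c - b - of_nat m - x) (m - k)))"

definition C_coef :: "complex list \<Rightarrow> nat list \<Rightarrow> nat \<Rightarrow> complex" where
  "C_coef fs ms k = (-1)^k / fact k * hypF_term k (map2 (\<lambda>fi mi. fi + of_nat mi) fs ms) fs"

definition Q_poly :: "complex \<Rightarrow> complex \<Rightarrow> complex list \<Rightarrow> nat list \<Rightarrow> complex \<Rightarrow> complex" where
  "Q_poly b c fs ms t = (let m = sum_list ms in
     1 / pochhammer (c - b - of_nat m) m *
     (\<Sum>k\<le>m. pochhammer b k * C_coef fs ms k * pochhammer t k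
               * pochhammer (c - b - of_nat m - t) (m - k)))"

end

theory Submission
  imports Defs
begin

(* Put G(y) = (f + y)_m, a polynomial of degree m in y, and expand it in falling factorials,
   G(y) = sum_j g_j y(y-1)...(y-j+1), so that g_k = Delta^k G(0) / k!.  Since
   (-k)_n / n! = (-1)^n binom(k,n), each terminating series of the statement is a k-th forward
   difference at 0:  (f)_m C_k = Delta^k G(0) / k! = g_k,  and
   D_k = Delta^k [G(-b-y)](0) / k! = sum_j (-1)^j binom(j,k) (b+k)_(j-k) g_j.
   Substituting the latter into P_m and summing over k first, Chu-Vandermonde turns
   sum_k binom(j,k) (1-c+b)_k (c-b-m-x)_(m-k) into (-1)^j (x)_j (c-b-m-x)_(m-j),
   which leaves exactly (f)_m Q(x). *)

definition fwd_diff :: "('a::comm_ring_1 \<Rightarrow> 'a) \<Rightarrow> 'a \<Rightarrow> 'a" where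
  "fwd_diff P y = P (y + 1) - P y"

lemma fwd_diff_power_eq_alternating_sum:
  "(fwd_diff ^^ k) P y = (\<Sum>n\<le>k. (-1)^(k+n) * of_nat (k choose n) * P (y + of_nat n))"
proof (induction k arbitrary: y)
  case 0
  then show ?case by simp
next
  case (Suc k)
  define T where "T n = (-1)^(k+n) * of_nat (k choose n) * P (y + of_nat n)" for n
  have lower: "(\<Sum>n\<le>k. T n)
      = (-1)^k * P y - (\<Sum>n\<le>k. (-1)^(k+n) * of_nat (k choose Suc n) * P (y + of_nat (Suc n)))"
  proof -
    have "(\<Sum>n\<le>k. T n) = (\<Sum>n\<le>Suc k. T n)"
      by (simp add: T_def binomial_eq_0)
    also have "\<dots> = T 0 + (\<Sum>n\<le>k. T (Suc n))"
      by (rule sum.atMost_Suc_shift)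
    finally show ?thesis
      by (simp add: T_def sum_negf)
  qed
  have "(fwd_diff ^^ Suc k) P y
      = (\<Sum>n\<le>k. (-1)^(k+n) * of_nat (k choose n) * P (y + of_nat (Suc n))) - (\<Sum>n\<le>k. T n)"
    by (simp add: fwd_diff_def Suc T_def add_ac)
  also have "\<dots> = (\<Sum>n\<le>Suc k. (-1)^(Suc k+n) * of_nat (Suc k choose n) * P (y + of_nat n))"
    unfolding lower by (subst sum.atMost_Suc_shift) (simp add: sum.distrib algebra_simps)
  finally show ?case .
qed

lemma fwd_diff_power_linear_combination:
  "(fwd_diff ^^ k) (\<lambda>y. \<Sum>j\<in>J. g j * Q j y) y = (\<Sum>j\<in>J. g j * (fwd_diff ^^ k) (Q j) y)"
  unfolding fwd_diff_power_eq_alternating_sum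
  by (simp add: sum_distrib_left sum.swap[of _ J] mult.left_commute)

lemma fwd_diff_pochhammer:
  "fwd_diff (\<lambda>y. pochhammer (a + y) n) y = of_nat n * pochhammer (a + y + 1) (n - 1)"
proof (cases n)
  case (Suc i)
  then show ?thesis
    unfolding fwd_diff_def
    by (simp only: pochhammer_Suc[of "a + (y + 1)"] pochhammer_rec[of "a + y"]) (simp add: algebra_simps)
qed (simp add: fwd_diff_def)

lemma Suc_times_binomial_Suc: "Suc k * (n choose Suc k) = (n - k) * (n choose k)"
  by (metis binomial_absorb_comp diff_Suc_1 times_binomial_minus1_eq zero_less_Suc)

lemma fwd_diff_power_pochhammer:
  "(fwd_diff ^^ k) (\<lambda>y. pochhammer (a + y) j) =
     (\<lambda>y. fact k * of_nat (j choose k) * pochhammer (a + y + of_nat k) (j - k))"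
proof (induction k)
  case 0
  then show ?case by simp
next
  case (Suc k)
  have coeff: "fact k * of_nat (j choose k) * of_nat (j - k) = (fact (Suc k) * of_nat (j choose Suc k) :: 'a)"
  proof -
    have "fact k * of_nat (j choose k) * of_nat (j - k) = (fact k * of_nat (Suc k * (j choose Suc k)) :: 'a)"
      by (simp only: Suc_times_binomial_Suc of_nat_mult mult_ac)
    then show ?thesis by (simp add: algebra_simps)
  qed
  show ?case
  proof
    fix y
    have "(fwd_diff ^^ Suc k) (\<lambda>y. pochhammer (a + y) j) y
        = fact k * of_nat (j choose k) * fwd_diff (\<lambda>y. pochhammer (a + of_nat k + y) (j - k)) y"
      unfolding funpow.simps comp_def Suc.IH fwd_diff_def by (simp add: algebra_simps)
    also have "\<dots> = fact k * of_nat (j choose k) * of_nat (j - k) * pochhammer (a + y + of_nat (Suc k)) (j - Suc k)"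
      unfolding fwd_diff_pochhammer by (simp add: algebra_simps)
    finally show "(fwd_diff ^^ Suc k) (\<lambda>y. pochhammer (a + y) j) y
        = fact (Suc k) * of_nat (j choose Suc k) * pochhammer (a + y + of_nat (Suc k)) (j - Suc k)"
      by (simp only: coeff)
  qed
qed

definition ffact :: "nat \<Rightarrow> 'a::comm_ring_1 \<Rightarrow> 'a" where
  "ffact j y = pochhammer (y - of_nat j + 1) j"

lemma ffact_Suc: "ffact (Suc j) y = (y - of_nat j) * ffact j y"
  unfolding ffact_def by (subst pochhammer_rec) (simp add: algebra_simps)

lemma ffact_minus: "ffact j (- b - y) = (-1)^j * pochhammer (b + y) j"
  unfolding ffact_def using pochhammer_minus'[of "- b - y" j] by (simp add: algebra_simps)

lemma fwd_diff_power_ffact_0: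
  "(fwd_diff ^^ k) (ffact j) 0 = (if j = k then fact k else (0::'a::field_char_0))"
proof -
  have ffact_eq: "ffact j = (\<lambda>y. pochhammer ((1 - of_nat j) + y) j)"
    by (auto simp: ffact_def algebra_simps)
  have "pochhammer (1 - of_nat j + of_nat k) (j - k) = (0::'a)" if "k < j"
  proof -
    have "1 - of_nat j + of_nat k = - (of_nat (j - k - 1) :: 'a)"
      using that by (simp add: of_nat_diff)
    then show ?thesis
      unfolding pochhammer_eq_0_iff using that by (intro exI[of _ "j - k - 1"]) simp
  qed
  then show ?thesis
    unfolding ffact_eq fwd_diff_power_pochhammer
    by (cases j k rule: linorder_cases) (auto simp: binomial_eq_0)
qed

definition ffact_span :: "nat \<Rightarrow> ('a::comm_ring_1 \<Rightarrow> 'a) \<Rightarrow> bool" where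
  "ffact_span N G \<longleftrightarrow> (\<exists>g. G = (\<lambda>y. \<Sum>j\<le>N. g j * ffact j y))"

lemma ffact_span_ffact: "j \<le> N \<Longrightarrow> ffact_span N (ffact j)"
  unfolding ffact_span_def
  by (rule exI[of _ "\<lambda>i. of_bool (i = j)"]) (simp add: fun_eq_iff sum.delta)

lemma ffact_span_zero: "ffact_span N (\<lambda>y. 0)"
  unfolding ffact_span_def by (rule exI[of _ "\<lambda>j. 0"]) simp

lemma ffact_span_add: "ffact_span N F \<Longrightarrow> ffact_span N G \<Longrightarrow> ffact_span N (\<lambda>y. F y + G y)"
  unfolding ffact_span_def
proof (elim exE)
  fix f g
  assume "F = (\<lambda>y. \<Sum>j\<le>N. f j * ffact j y)" "G = (\<lambda>y. \<Sum>j\<le>N. g j * ffact j y)"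
  then show "\<exists>h. (\<lambda>y. F y + G y) = (\<lambda>y. \<Sum>j\<le>N. h j * ffact j y)"
    by (intro exI[of _ "\<lambda>j. f j + g j"]) (simp add: sum.distrib algebra_simps)
qed

lemma ffact_span_cmult: "ffact_span N F \<Longrightarrow> ffact_span N (\<lambda>y. c * F y)"
  unfolding ffact_span_def
proof (elim exE)
  fix f
  assume "F = (\<lambda>y. \<Sum>j\<le>N. f j * ffact j y)"
  then show "\<exists>h. (\<lambda>y. c * F y) = (\<lambda>y. \<Sum>j\<le>N. h j * ffact j y)"
    by (intro exI[of _ "\<lambda>j. c * f j"]) (simp add: sum_distrib_left mult.assoc)
qed

lemma ffact_span_sum:
  "(\<And>i. i \<in> I \<Longrightarrow> ffact_span N (F i)) \<Longrightarrow> ffact_span N (\<lambda>y. \<Sum>i\<in>I. F i y)"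
proof (induction I rule: infinite_finite_induct)
  case (infinite I)
  then show ?case by (simp add: ffact_span_zero)
next
  case empty
  then show ?case by (simp add: ffact_span_zero)
next
  case (insert i I)
  then show ?case by (simp add: ffact_span_add)
qed

lemma ffact_span_mult_linear:
  assumes "ffact_span N G"
  shows "ffact_span (Suc N) (\<lambda>y. (y + a) * G y)"
proof -
  obtain g where g: "G = (\<lambda>y. \<Sum>j\<le>N. g j * ffact j y)"
    using assms unfolding ffact_span_def by blast
  have "(y + a) * ffact j y = ffact (Suc j) y + (a + of_nat j) * ffact j y" for j y
    by (simp add: ffact_Suc algebra_simps)
  then have "(\<lambda>y. (y + a) * G y) = (\<lambda>y. \<Sum>j\<le>N. g j * (ffact (Suc j) y + (a + of_nat j) * ffact j y))"
    by (simp add: g sum_distrib_left algebra_simps)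
  then show ?thesis
    by (simp only:) (intro ffact_span_sum ffact_span_cmult ffact_span_add ffact_span_ffact; simp)
qed

lemma ffact_span_mult_pochhammer:
  "ffact_span N G \<Longrightarrow> ffact_span (n + N) (\<lambda>y. pochhammer (a + y) n * G y)"
proof (induction n)
  case 0
  then show ?case by simp
next
  case (Suc n)
  have "pochhammer (a + y) (Suc n) * G y = (y + (a + of_nat n)) * (pochhammer (a + y) n * G y)" for y
    by (simp add: pochhammer_Suc algebra_simps)
  then show ?case
    using ffact_span_mult_linear[OF Suc.IH[OF Suc.prems]] by simp
qed

lemma ffact_span_poch_vec_shift:
  "length fs = length ms \<Longrightarrow> ffact_span (sum_list ms) (\<lambda>y. poch_vec (map (\<lambda>f. f + y) fs) ms)"
proof (induction fs ms rule: list_induct2)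
  case Nil
  then show ?case
    using ffact_span_ffact[of 0 0] by (simp add: poch_vec_def ffact_def[abs_def])
next
  case (Cons f fs m ms)
  then show ?case
    using ffact_span_mult_pochhammer[OF Cons.IH, of m f] by (simp add: poch_vec_def add.commute)
qed

lemma fwd_diff_power_ffact_expansion_0:
  fixes g :: "nat \<Rightarrow> 'a::field_char_0"
  assumes "k \<le> N"
  shows "(fwd_diff ^^ k) (\<lambda>y. \<Sum>j\<le>N. g j * ffact j y) 0 = fact k * g k"
  using assms by (simp add: fwd_diff_power_linear_combination fwd_diff_power_ffact_0 if_distrib sum.delta' cong: if_cong)

lemma fwd_diff_power_reflected_ffact_expansion_0:
  fixes g :: "nat \<Rightarrow> 'a::field_char_0"
  shows "(fwd_diff ^^ k) (\<lambda>y. \<Sum>j\<le>N. g j * ffact j (- b - y)) 0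
    = fact k * (\<Sum>j\<le>N. (-1)^j * of_nat (j choose k) * pochhammer (b + of_nat k) (j - k) * g j)"
proof -
  have reflected: "(\<lambda>y. \<Sum>j\<le>N. g j * ffact j (- b - y))
      = (\<lambda>y. \<Sum>j\<le>N. (g j * (-1)^j) * pochhammer (b + y) j)"
    by (simp add: ffact_minus mult.assoc)
  show ?thesis
    unfolding reflected fwd_diff_power_linear_combination fwd_diff_power_pochhammer by (simp add: sum_distrib_left mult_ac)
qed

lemma pochhammer_minus_of_nat:
  "pochhammer (- of_nat k :: 'a::field_char_0) n = (-1)^n * fact n * of_nat (k choose n)"
proof -
  have "fact n * of_nat (k choose n) = (-1)^n * pochhammer (- of_nat k :: 'a) n"
    using gbinomial_pochhammer[of "of_nat k :: 'a" n] by (simp add: binomial_gbinomial field_simps)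
  then have "(-1)^n * (fact n * of_nat (k choose n)) = ((-1)^n * (-1)^n) * pochhammer (- of_nat k :: 'a) n"
    by (simp only: mult.assoc)
  then show ?thesis by (simp add: mult.assoc)
qed

lemma hypF_term_eq_fwd_diff:
  assumes nonzero: "\<And>n. n \<le> k \<Longrightarrow> prod_list (map (\<lambda>a. pochhammer a n) bs) \<noteq> 0"
    and ratio: "\<And>n. n \<le> k \<Longrightarrow>
      c * prod_list (map (\<lambda>a. pochhammer a n) as) = prod_list (map (\<lambda>a. pochhammer a n) bs) * G (of_nat n)"
  shows "c * hypF_term k as bs = (-1)^k * (fwd_diff ^^ k) G 0"
proof -
  have summand: "c * (pochhammer (- of_nat k) n * prod_list (map (\<lambda>a. pochhammer a n) as)
      / (prod_list (map (\<lambda>a. pochhammer a n) bs) * fact n)) = (-1)^n * of_nat (k choose n) * G (of_nat n)"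
    if "n \<le> k" for n
    using ratio[OF that] nonzero[OF that] by (simp add: pochhammer_minus_of_nat field_simps)
  have "c * hypF_term k as bs = (\<Sum>n\<le>k. (-1)^n * of_nat (k choose n) * G (of_nat n))"
    unfolding hypF_term_def sum_distrib_left using summand by (intro sum.cong) simp_all
  also have "\<dots> = (-1)^k * (fwd_diff ^^ k) G 0"
    by (simp add: fwd_diff_power_eq_alternating_sum sum_distrib_left power_add mult.assoc[symmetric])
  finally show ?thesis .
qed

lemma pochhammer_mult_shift_comm:
  "pochhammer z m * pochhammer (z + of_nat m) n = pochhammer z n * pochhammer (z + of_nat n) m"
  by (metis add.commute pochhammer_product')

lemma pochhammer_reflect_mult:
  fixes z :: "'a::comm_ring_1"
  shows "pochhammer z m * pochhammer (1 - z) n = pochhammer (1 - z - of_nat m) n * pochhammer (z - of_nat n) m"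
proof -
  define a where "a = 1 - z - of_nat m"
  have "(-1)^m * (pochhammer z m * pochhammer (1 - z) n) = pochhammer a m * pochhammer (a + of_nat m) n"
    using pochhammer_minus'[of "- z" m] by (simp add: a_def algebra_simps)
  also have "\<dots> = pochhammer a n * pochhammer (a + of_nat n) m"
    by (rule pochhammer_mult_shift_comm)
  also have "\<dots> = (-1)^m * (pochhammer a n * pochhammer (z - of_nat n) m)"
    using pochhammer_minus'[of "of_nat n - z" m] by (simp add: a_def algebra_simps)
  finally have "(-1)^m * ((-1)^m * (pochhammer z m * pochhammer (1 - z) n))
      = (-1)^m * ((-1)^m * (pochhammer a n * pochhammer (z - of_nat n) m))"
    by simp
  then show ?thesis
    unfolding a_def by (simp only: mult.assoc[symmetric] minus_one_mult_self mult_1)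
qed

lemma poch_vec_mult_shift:
  "length fs = length ms \<Longrightarrow>
    poch_vec fs ms * prod_list (map (\<lambda>a. pochhammer a n) (map2 (\<lambda>f m. f + of_nat m) fs ms))
    = prod_list (map (\<lambda>a. pochhammer a n) fs) * poch_vec (map (\<lambda>f. f + of_nat n) fs) ms"
proof (induction fs ms rule: list_induct2)
  case (Cons f fs m ms)
  then show ?case
    using arg_cong2[where f = "(*)", OF pochhammer_mult_shift_comm[of f m n] Cons.IH]
    by (simp add: poch_vec_def mult_ac)
qed (simp add: poch_vec_def)

lemma poch_vec_mult_reflect:
  "length fs = length ms \<Longrightarrow>
    poch_vec (map (\<lambda>f. f - b) fs) ms * prod_list (map (\<lambda>a. pochhammer a n) (map (\<lambda>f. 1 - f + b) fs))
    = prod_list (map (\<lambda>a. pochhammer a n) (map2 (\<lambda>f m. 1 - f + b - of_nat m) fs ms))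
      * poch_vec (map (\<lambda>f. f + (- b - of_nat n)) fs) ms"
proof (induction fs ms rule: list_induct2)
  case (Cons f fs m ms)
  have factor: "pochhammer (f - b) m * pochhammer (1 - f + b) n
      = pochhammer (1 - f + b - of_nat m) n * pochhammer (f + (- b - of_nat n)) m"
    using pochhammer_reflect_mult[of "f - b" m n] by (simp add: algebra_simps)
  show ?case
    using arg_cong2[where f = "(*)", OF factor Cons.IH] by (simp add: poch_vec_def mult_ac)
qed (simp add: poch_vec_def)

lemma prod_list_pochhammer_nonzero:
  "(\<And>i. i < length xs \<Longrightarrow> pochhammer (xs ! i) n \<noteq> 0) \<Longrightarrow>
    prod_list (map (\<lambda>a. pochhammer a n) xs) \<noteq> (0 :: 'a::{comm_semiring_1,semiring_no_zero_divisors})"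
  by (auto simp: prod_list_zero_iff in_set_conv_nth)

lemma C_coef_eq_fwd_diff:
  assumes len: "length fs = length ms"
    and nonzero: "\<And>i n. i < length ms \<Longrightarrow> n \<le> k \<Longrightarrow> pochhammer (fs ! i) n \<noteq> 0"
  shows "poch_vec fs ms * C_coef fs ms k = (fwd_diff ^^ k) (\<lambda>y. poch_vec (map (\<lambda>f. f + y) fs) ms) 0 / fact k"
proof -
  let ?H = "hypF_term k (map2 (\<lambda>f m. f + of_nat m) fs ms) fs"
  let ?\<Delta> = "(fwd_diff ^^ k) (\<lambda>y. poch_vec (map (\<lambda>f. f + y) fs) ms) 0"
  have hyp: "poch_vec fs ms * ?H = (-1)^k * ?\<Delta>"
    using len nonzero
    by (intro hypF_term_eq_fwd_diff prod_list_pochhammer_nonzero poch_vec_mult_shift) auto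
  have "poch_vec fs ms * C_coef fs ms k = (-1)^k / fact k * (poch_vec fs ms * ?H)"
    unfolding C_coef_def by (rule mult.left_commute)
  also have "\<dots> = ((-1)^k * (-1)^k) * ?\<Delta> / fact k"
    unfolding hyp by simp
  finally show ?thesis
    by simp
qed

lemma D_coef_eq_fwd_diff:
  assumes len: "length fs = length ms"
    and nonzero: "\<And>i n. i < length ms \<Longrightarrow> n \<le> k \<Longrightarrow>
      pochhammer (1 - fs ! i + b - of_nat (ms ! i)) n \<noteq> 0"
  shows "D_coef b fs ms k = (fwd_diff ^^ k) (\<lambda>y. poch_vec (map (\<lambda>f. f + (- b - y)) fs) ms) 0 / fact k"
proof -
  have "poch_vec (map (\<lambda>f. f - b) fs) ms
      * hypF_term k (map (\<lambda>f. 1 - f + b) fs) (map2 (\<lambda>f m. 1 - f + b - of_nat m) fs ms)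
      = (-1)^k * (fwd_diff ^^ k) (\<lambda>y. poch_vec (map (\<lambda>f. f + (- b - y)) fs) ms) 0"
    using len nonzero
    by (intro hypF_term_eq_fwd_diff prod_list_pochhammer_nonzero poch_vec_mult_reflect) auto
  then show ?thesis
    unfolding D_coef_def by (simp add: field_simps)
qed

lemma poch_vec_times_C_coef_eq_ffact_coeff:
  assumes len: "length fs = length ms" and "k \<le> N"
    and nonzero: "\<And>i n. i < length ms \<Longrightarrow> n \<le> k \<Longrightarrow> pochhammer (fs ! i) n \<noteq> 0"
    and expansion: "(\<lambda>y. poch_vec (map (\<lambda>f. f + y) fs) ms) = (\<lambda>y. \<Sum>j\<le>N. g j * ffact j y)"
  shows "poch_vec fs ms * C_coef fs ms k = g k"
proof -
  have "poch_vec fs ms * C_coef fs ms k = (fwd_diff ^^ k) (\<lambda>y. poch_vec (map (\<lambda>f. f + y) fs) ms) 0 / fact k"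
    using len nonzero by (rule C_coef_eq_fwd_diff)
  then show ?thesis
    unfolding expansion fwd_diff_power_ffact_expansion_0[OF \<open>k \<le> N\<close>] by simp
qed

lemma D_coef_eq_ffact_coeff_sum:
  assumes len: "length fs = length ms"
    and nonzero: "\<And>i n. i < length ms \<Longrightarrow> n \<le> k \<Longrightarrow>
      pochhammer (1 - fs ! i + b - of_nat (ms ! i)) n \<noteq> 0"
    and expansion: "(\<lambda>y. poch_vec (map (\<lambda>f. f + y) fs) ms) = (\<lambda>y. \<Sum>j\<le>N. g j * ffact j y)"
  shows "D_coef b fs ms k
    = (\<Sum>j\<le>N. (-1)^j * of_nat (j choose k) * pochhammer (b + of_nat k) (j - k) * g j)"
proof -
  have "(\<lambda>y. poch_vec (map (\<lambda>f. f + (- b - y)) fs) ms) = (\<lambda>y. \<Sum>j\<le>N. g j * ffact j (- b - y))"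
    using fun_cong[OF expansion] by auto
  then show ?thesis
    by (simp add: D_coef_eq_fwd_diff[OF len nonzero] fwd_diff_power_reflected_ffact_expansion_0)
qed

lemma binomial_pochhammer_sum_reflect:
  fixes A e x :: "'a::comm_ring_1"
  assumes "j \<le> N" and "e + A + of_nat N = 1 - x"
  shows "(\<Sum>k\<le>j. of_nat (j choose k) * pochhammer e k * pochhammer A (N - k))
    = (-1)^j * pochhammer x j * pochhammer A (N - j)"
proof -
  have split: "pochhammer A (N - k) = pochhammer A (N - j) * pochhammer (A + of_nat (N - j)) (j - k)"
    if "k \<le> j" for k
    using pochhammer_product'[of A "N - j" "j - k"] that assms(1) by simp
  have "e + (A + of_nat (N - j)) = (e + A + of_nat N) - of_nat j"
    using assms(1) by (simp add: of_nat_diff algebra_simps)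
  also have "\<dots> = - x - of_nat j + 1"
    unfolding assms(2) by (simp add: algebra_simps)
  finally have shift: "e + (A + of_nat (N - j)) = - x - of_nat j + 1" .
  have "(\<Sum>k\<le>j. of_nat (j choose k) * pochhammer e k * pochhammer A (N - k))
      = pochhammer A (N - j) * (\<Sum>k\<le>j. of_nat (j choose k) * pochhammer e k * pochhammer (A + of_nat (N - j)) (j - k))"
    unfolding sum_distrib_left
  proof (intro sum.cong refl)
    fix k assume "k \<in> {..j}"
    then have "k \<le> j" by simp
    then show "of_nat (j choose k) * pochhammer e k * pochhammer A (N - k)
        = pochhammer A (N - j) * (of_nat (j choose k) * pochhammer e k * pochhammer (A + of_nat (N - j)) (j - k))"
      unfolding split[OF \<open>k \<le> j\<close>] by (simp only: mult_ac)
  qed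
  also have "\<dots> = pochhammer A (N - j) * pochhammer (- x - of_nat j + 1) j"
    by (simp only: pochhammer_binomial_sum[symmetric] shift)
  finally show ?thesis
    by (simp add: pochhammer_minus' mult_ac)
qed

lemma reflected_coefficient_sum:
  fixes g :: "nat \<Rightarrow> 'a::comm_ring_1"
  assumes "e + A + of_nat N = 1 - x"
  shows "(\<Sum>k\<le>N. pochhammer b k * pochhammer e k
      * (\<Sum>j\<le>N. (-1)^j * of_nat (j choose k) * pochhammer (b + of_nat k) (j - k) * g j) * pochhammer A (N - k))
    = (\<Sum>j\<le>N. pochhammer b j * g j * pochhammer x j * pochhammer A (N - j))"
proof -
  have absorb: "of_nat (j choose k) * pochhammer b k * pochhammer (b + of_nat k) (j - k)
      = of_nat (j choose k) * pochhammer b j" for j k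
    by (cases "k \<le> j") (simp_all add: pochhammer_product binomial_eq_0)
  have summand: "pochhammer b k * pochhammer e k * ((-1)^j * of_nat (j choose k) * pochhammer (b + of_nat k) (j - k) * g j)
      * pochhammer A (N - k) = (-1)^j * g j * pochhammer b j * (of_nat (j choose k) * pochhammer e k * pochhammer A (N - k))"
    for j k
  proof -
    have "pochhammer b k * pochhammer e k * ((-1)^j * of_nat (j choose k) * pochhammer (b + of_nat k) (j - k) * g j)
        * pochhammer A (N - k) = ((-1)^j * g j * pochhammer e k * pochhammer A (N - k))
        * (of_nat (j choose k) * pochhammer b k * pochhammer (b + of_nat k) (j - k))"
      by (simp only: mult_ac)
    also have "\<dots> = ((-1)^j * g j * pochhammer e k * pochhammer A (N - k)) * (of_nat (j choose k) * pochhammer b j)"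
      by (simp only: absorb)
    finally show ?thesis
      by (simp only: mult_ac)
  qed
  have truncate: "(\<Sum>k\<le>N. of_nat (j choose k) * pochhammer e k * pochhammer A (N - k))
      = (\<Sum>k\<le>j. of_nat (j choose k) * pochhammer e k * pochhammer A (N - k))" if "j \<le> N" for j
    using that by (intro sum.mono_neutral_right) (auto simp: binomial_eq_0)
  have "(\<Sum>k\<le>N. pochhammer b k * pochhammer e k
      * (\<Sum>j\<le>N. (-1)^j * of_nat (j choose k) * pochhammer (b + of_nat k) (j - k) * g j) * pochhammer A (N - k))
    = (\<Sum>k\<le>N. \<Sum>j\<le>N. (-1)^j * g j * pochhammer b j
        * (of_nat (j choose k) * pochhammer e k * pochhammer A (N - k)))"
    unfolding sum_distrib_left sum_distrib_right summand ..
  also have "\<dots> = (\<Sum>j\<le>N. (-1)^j * g j * pochhammer b j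
      * (\<Sum>k\<le>N. of_nat (j choose k) * pochhammer e k * pochhammer A (N - k)))"
    by (subst sum.swap) (simp add: sum_distrib_left)
  also have "\<dots> = (\<Sum>j\<le>N. pochhammer b j * g j * pochhammer x j * pochhammer A (N - j))"
  proof (intro sum.cong refl)
    fix j assume "j \<in> {..N}"
    then have j: "j \<le> N" by simp
    show "(-1)^j * g j * pochhammer b j * (\<Sum>k\<le>N. of_nat (j choose k) * pochhammer e k * pochhammer A (N - k))
        = pochhammer b j * g j * pochhammer x j * pochhammer A (N - j)"
      unfolding truncate[OF j] binomial_pochhammer_sum_reflect[OF j assms]
      by (simp add: mult_ac)
  qed
  finally show ?thesis .
qed

theorem lemma2:
  fixes b c :: complex and fs :: "complex list" and ms :: "nat list"
  assumes "length fs = length ms" and "length ms \<ge> 1"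
    and "pochhammer (c - b - of_nat (sum_list ms)) (sum_list ms) \<noteq> 0"
    and "\<And>i n. i < length ms \<Longrightarrow> n \<le> sum_list ms \<Longrightarrow>
           pochhammer (1 - fs ! i + b - of_nat (ms ! i)) n \<noteq> 0"
    and "\<And>i n. i < length ms \<Longrightarrow> n \<le> sum_list ms \<Longrightarrow> pochhammer (fs ! i) n \<noteq> 0"
  shows "\<forall>x. P_poly b c fs ms x = poch_vec fs ms * Q_poly b c fs ms x"
proof
  fix x
  define N where "N = sum_list ms"
  define A where "A = c - b - of_nat N - x"
  obtain g where g: "(\<lambda>y. poch_vec (map (\<lambda>f. f + y) fs) ms) = (\<lambda>y. \<Sum>j\<le>N. g j * ffact j y)"
    using ffact_span_poch_vec_shift[OF assms(1)] unfolding ffact_span_def N_def by blast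
  have "(\<Sum>k\<le>N. pochhammer b k * pochhammer (1 - c + b) k * D_coef b fs ms k * pochhammer A (N - k))
      = (\<Sum>k\<le>N. pochhammer b k * pochhammer (1 - c + b) k
          * (\<Sum>j\<le>N. (-1)^j * of_nat (j choose k) * pochhammer (b + of_nat k) (j - k) * g j)
          * pochhammer A (N - k))"
    using assms(4) by (intro sum.cong refl) (simp add: D_coef_eq_ffact_coeff_sum[OF assms(1) _ g] N_def)
  also have "\<dots> = (\<Sum>j\<le>N. pochhammer b j * g j * pochhammer x j * pochhammer A (N - j))"
    by (rule reflected_coefficient_sum) (simp add: A_def)
  also have "\<dots> = poch_vec fs ms
      * (\<Sum>j\<le>N. pochhammer b j * C_coef fs ms j * pochhammer x j * pochhammer A (N - j))"
    unfolding sum_distrib_left using assms(5)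
    by (intro sum.cong refl) (simp add: poch_vec_times_C_coef_eq_ffact_coeff[OF assms(1) _ _ g, symmetric] N_def mult_ac)
  finally show "P_poly b c fs ms x = poch_vec fs ms * Q_poly b c fs ms x"
    unfolding P_poly_def Q_poly_def Let_def N_def[symmetric] A_def[symmetric] by simp
qed

end
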